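(* Let $H$ be an infinite-dimensional complex Hilbert space and let $\varphi: B(H)\to B(H)$ be an additive map whose range contains $F_2(H)$ and such that $H_{\varphi(T)\varphi(S)^{*}}(\{\lambda\}) = H_{TS^{*}}(\{\lambda\})$ for all $T,S\in B(H)$ and $\lambda\in\mathbb{C}$. Then $\varphi$ is injective and linear, and for every $R\in B(H)$, $R$ has rank one if and only if $\varphi(R)$ has rank one.
   Context: $B(H)$ denotes the algebra of bounded linear operators on $H$, and $T^*$ the adjoint of $T$. $F_2(H)$ is the set of operators in $B(H)$ of rank at most two. For $T\in B(H)$ and $x\in H$, the local resolvent set $\rho_T(x)$ is the union of all open sets $U\subseteq\mathbb{C}$ for which there is an analytic $f:U\to H$ with $(\mu I-T)f(\mu)=x$ for all $\mu\in U$; the local spectrum is $\sigma_T(x)=\mathbb{C}\setminus\rho_T(x)$. For $F\subseteq\mathbb{C}$, $H_T(F)=\{x\in H: \sigma_T(x)\subseteq F\}$. *)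

theory Defs
  imports "HOL-Analysis.Analysis"
begin

class scaleC =
  fixes scaleC :: "complex \<Rightarrow> 'a \<Rightarrow> 'a" (infixr "*\<^sub>C" 75)

class complex_vector = real_vector + scaleC +
  assumes scaleC_add_right: "a *\<^sub>C (x + y) = a *\<^sub>C x + a *\<^sub>C y"
    and scaleC_add_left: "(a + b) *\<^sub>C x = a *\<^sub>C x + b *\<^sub>C x"
    and scaleC_scaleC: "a *\<^sub>C (b *\<^sub>C x) = (a * b) *\<^sub>C x"
    and scaleC_one: "1 *\<^sub>C x = x"
    and scaleR_scaleC: "scaleR r x = complex_of_real r *\<^sub>C x"

class complex_inner = complex_vector + real_normed_vector +
  fixes cinner :: "'a \<Rightarrow> 'a \<Rightarrow> complex"
  assumes cinner_commute: "cinner x y = cnj (cinner y x)"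
    and cinner_add_left: "cinner (x + y) z = cinner x z + cinner y z"
    and cinner_scaleC_left: "cinner (r *\<^sub>C x) y = cnj r * cinner x y"
    and cinner_ge_zero: "0 \<le> Re (cinner x x)"
    and cinner_eq_zero_iff: "cinner x x = 0 \<longleftrightarrow> x = 0"
    and norm_eq_sqrt_cinner: "norm x = sqrt (Re (cinner x x))"

class chilbert_space = complex_inner + complete_space

definition cspan :: "'a::complex_vector set \<Rightarrow> 'a set" where
  "cspan V = {x. \<exists>F c. finite F \<and> F \<subseteq> V \<and> x = (\<Sum>v\<in>F. c v *\<^sub>C v)}"

definition infinite_dimensional :: "'a::complex_vector itself \<Rightarrow> bool" where
  "infinite_dimensional _ \<longleftrightarrow> \<not> (\<exists>V::'a set. finite V \<and> cspan V = UNIV)"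

definition clinear :: "('a::complex_vector \<Rightarrow> 'b::complex_vector) \<Rightarrow> bool" where
  "clinear T \<longleftrightarrow> (\<forall>x y. T (x + y) = T x + T y) \<and> (\<forall>c x. T (c *\<^sub>C x) = c *\<^sub>C T x)"

definition bops :: "('a::complex_inner \<Rightarrow> 'a) set" where
  "bops = {T. clinear T \<and> (\<exists>K. \<forall>x. norm (T x) \<le> K * norm x)}"

definition adj :: "('a::complex_inner \<Rightarrow> 'a) \<Rightarrow> ('a \<Rightarrow> 'a)" where
  "adj T = (THE S. \<forall>x y. cinner (T x) y = cinner x (S y))"

definition rank_le :: "('a::complex_vector \<Rightarrow> 'a) \<Rightarrow> nat \<Rightarrow> bool" where
  "rank_le T n \<longleftrightarrow> (\<exists>V. finite V \<and> card V \<le> n \<and> range T \<subseteq> cspan V)"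

definition rank_one :: "('a::complex_vector \<Rightarrow> 'a) \<Rightarrow> bool" where
  "rank_one T \<longleftrightarrow> rank_le T 1 \<and> \<not> rank_le T 0"

definition F2 :: "('a::complex_inner \<Rightarrow> 'a) set" where
  "F2 = {T \<in> bops. rank_le T 2}"

definition hol_on :: "(complex \<Rightarrow> 'a::complex_inner) \<Rightarrow> complex set \<Rightarrow> bool" where
  "hol_on f U \<longleftrightarrow> (\<forall>z\<in>U. \<exists>D. (f has_derivative (\<lambda>h. h *\<^sub>C D)) (at z))"

definition local_resolvent :: "('a::complex_inner \<Rightarrow> 'a) \<Rightarrow> 'a \<Rightarrow> complex set" where
  "local_resolvent T x = \<Union>{U. open U \<and> (\<exists>f. hol_on f U \<and> (\<forall>\<mu>\<in>U. \<mu> *\<^sub>C f \<mu> - T (f \<mu>) = x))}"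

definition local_spectrum :: "('a::complex_inner \<Rightarrow> 'a) \<Rightarrow> 'a \<Rightarrow> complex set" where
  "local_spectrum T x = - local_resolvent T x"

definition spectral_subspace :: "('a::complex_inner \<Rightarrow> 'a) \<Rightarrow> complex set \<Rightarrow> 'a set" where
  "spectral_subspace T F = {x. local_spectrum T x \<subseteq> F}"

end

theory Submission
  imports Defs
begin

text \<open>Write \<open>u \<otimes> x\<close> for the operator \<open>v \<mapsto> \<langle>x, v\<rangle> u\<close>. For \<open>S = x \<otimes> y\<close> one has
  \<open>T S\<^sup>* = T y \<otimes> x\<close>, whose spectral subspaces \<open>H({\<lambda>})\<close> with \<open>\<lambda> \<noteq> 0\<close> contain nonzero vectors only
  for \<open>\<lambda> = \<langle>x, T y\<rangle>\<close>. So these subspaces, over all rank-one \<open>S\<close>, determine every \<open>\<langle>x, T y\<rangle>\<close>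
  and hence \<open>T\<close>. This gives injectivity of \<open>\<phi>\<close> and, since every rank-one operator is a value of
  \<open>\<phi>\<close>, also homogeneity, because scaling an operator by \<open>c\<close> moves its spectral subspace at \<open>\<lambda>/c\<close>
  to \<open>\<lambda>\<close>. Finally, \<open>R\<close> has rank at most one iff the spectral subspace of \<open>R S\<^sup>*\<close> at \<open>1\<close> lies
  in a line for every \<open>S\<close> of rank at most two, a property that \<open>\<phi>\<close> transports in both directions.
  Adjoints of bounded operators exist by the Riesz representation theorem, obtained from nearest
  points in closed convex sets.\<close>

context complex_vector begin

lemma scaleC_zero_left [simp]: "0 *\<^sub>C x = 0"
  using scaleC_add_left[of 0 0 x] by simp

lemma scaleC_zero_right [simp]: "a *\<^sub>C 0 = 0"
  using scaleC_add_right[of a 0 0] by simp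

lemma scaleC_minus_left: "(- a) *\<^sub>C x = - (a *\<^sub>C x)"
  by (rule minus_unique[symmetric]) (simp flip: scaleC_add_left)

lemma scaleC_minus_right: "a *\<^sub>C (- x) = - (a *\<^sub>C x)"
  by (rule minus_unique[symmetric]) (simp flip: scaleC_add_right)

lemma scaleC_diff_left: "(a - b) *\<^sub>C x = a *\<^sub>C x - b *\<^sub>C x"
  using scaleC_add_left[of a "- b" x] by (simp add: scaleC_minus_left)

lemma scaleC_diff_right: "a *\<^sub>C (x - y) = a *\<^sub>C x - a *\<^sub>C y"
  using scaleC_add_right[of a x "- y"] by (simp add: scaleC_minus_right)

lemma scaleC_left_commute: "a *\<^sub>C (b *\<^sub>C x) = b *\<^sub>C (a *\<^sub>C x)"
  by (simp add: scaleC_scaleC mult.commute)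

lemma scaleC_eq_0_iff [simp]: "a *\<^sub>C x = 0 \<longleftrightarrow> a = 0 \<or> x = 0"
proof
  assume ax: "a *\<^sub>C x = 0"
  show "a = 0 \<or> x = 0"
  proof (cases "a = 0")
    case False
    then have "x = inverse a *\<^sub>C (a *\<^sub>C x)"
      by (simp add: scaleC_scaleC scaleC_one)
    with ax show ?thesis by simp
  qed simp
qed auto

end

context complex_inner begin

lemma cinner_scaleC_right: "cinner x (c *\<^sub>C y) = c * cinner x y"
  by (subst cinner_commute) (simp add: cinner_scaleC_left cinner_commute[of y x])

lemma cinner_add_right: "cinner x (y + z) = cinner x y + cinner x z"
  by (subst cinner_commute) (simp add: cinner_add_left cinner_commute[of y x] cinner_commute[of z x])

lemma cinner_zero_left [simp]: "cinner 0 y = 0"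
  using cinner_add_left[of 0 0 y] by simp

lemma cinner_zero_right [simp]: "cinner y 0 = 0"
  using cinner_add_right[of y 0 0] by simp

lemma cinner_minus_left: "cinner (- x) y = - cinner x y"
  by (rule group_add_class.minus_unique[symmetric]) (simp flip: cinner_add_left)

lemma cinner_minus_right: "cinner y (- x) = - cinner y x"
  by (rule group_add_class.minus_unique[symmetric]) (simp flip: cinner_add_right)

lemma cinner_diff_left: "cinner (x - y) z = cinner x z - cinner y z"
  using cinner_add_left[of x "- y" z] by (simp add: cinner_minus_left)

lemma cinner_diff_right: "cinner z (x - y) = cinner z x - cinner z y"
  using cinner_add_right[of z x "- y"] by (simp add: cinner_minus_right)

lemma cinner_self_real: "cinner x x = complex_of_real (Re (cinner x x))"
  using cinner_commute[of x x] by (simp add: complex_eq_iff)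

lemma Re_cinner_self_pos: "x \<noteq> 0 \<Longrightarrow> 0 < Re (cinner x x)"
  using cinner_ge_zero[of x] cinner_eq_zero_iff[of x] cinner_self_real[of x]
  by (metis of_real_0 order_le_imp_less_or_eq)

lemma power2_norm_eq_cinner: "(norm x)\<^sup>2 = Re (cinner x x)"
  using cinner_ge_zero[of x] by (simp add: norm_eq_sqrt_cinner)

lemma norm_scaleC: "norm (a *\<^sub>C x) = cmod a * norm x"
proof -
  have "(norm (a *\<^sub>C x))\<^sup>2 = Re (cnj a * (a * cinner x x))"
    by (simp only: power2_norm_eq_cinner cinner_scaleC_left cinner_scaleC_right mult.left_commute)
  also have "cnj a * (a * cinner x x) = complex_of_real ((cmod a)\<^sup>2 * Re (cinner x x))"
  proof -
    have "cnj a * (a * cinner x x) = (a * cnj a) * complex_of_real (Re (cinner x x))"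
      by (subst cinner_self_real) (simp only: mult_ac)
    also have "\<dots> = complex_of_real ((cmod a)\<^sup>2) * complex_of_real (Re (cinner x x))"
      by (simp only: complex_norm_square)
    finally show ?thesis by simp
  qed
  finally have "(norm (a *\<^sub>C x))\<^sup>2 = (cmod a * norm x)\<^sup>2"
    by (simp add: power2_norm_eq_cinner power_mult_distrib)
  then show ?thesis by (simp add: power2_eq_iff_nonneg)
qed

lemma Re_cinner_self_minus_projection:
  fixes x y :: 'a
  assumes "y \<noteq> 0"
  defines "t \<equiv> cinner y x / cinner y y"
  shows "Re (cinner (x - t *\<^sub>C y) (x - t *\<^sub>C y))
     = Re (cinner x x) - (cmod (cinner y x))\<^sup>2 / Re (cinner y y)"
proof -
  define N where "N = Re (cinner y y)"
  define a where "a = cinner y x"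
  have N: "cinner y y = complex_of_real N" unfolding N_def by (rule cinner_self_real)
  have "N \<noteq> 0" using Re_cinner_self_pos[OF assms(1)] by (simp add: N_def)
  moreover have "cnj a * a = complex_of_real ((cmod a)\<^sup>2)"
    by (simp only: complex_norm_square mult.commute)
  moreover have "cinner x y = cnj a" unfolding a_def by (rule cinner_commute)
  ultimately have "cinner (x - t *\<^sub>C y) (x - t *\<^sub>C y) = cinner x x - complex_of_real ((cmod a)\<^sup>2 / N)"
    by (simp add: t_def a_def[symmetric] N cinner_diff_left cinner_diff_right cinner_scaleC_left
        cinner_scaleC_right field_simps)
  then show ?thesis by (simp add: N_def a_def)
qed

lemma norm_cinner_le: "cmod (cinner y x) \<le> norm y * norm x"
proof (cases "y = 0")
  case False
  have "0 \<le> Re (cinner x x) - (cmod (cinner y x))\<^sup>2 / Re (cinner y y)"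
    using Re_cinner_self_minus_projection[OF False, of x] cinner_ge_zero by metis
  then have "(cmod (cinner y x))\<^sup>2 \<le> (norm y * norm x)\<^sup>2"
    using Re_cinner_self_pos[OF False]
    by (simp add: power2_norm_eq_cinner power_mult_distrib field_simps)
  then show ?thesis by (meson norm_ge_zero power2_le_imp_le zero_le_mult_iff)
qed simp

lemma cinner_eq_0_if_norm_minimal:
  assumes "\<And>t. norm x \<le> norm (x - t *\<^sub>C y)"
  shows "cinner y x = 0"
proof (cases "y = 0")
  case False
  have "Re (cinner x x) \<le> Re (cinner x x) - (cmod (cinner y x))\<^sup>2 / Re (cinner y y)"
    using assms[of "cinner y x / cinner y y"] Re_cinner_self_minus_projection[OF False, of x]
    by (metis norm_ge_zero power2_norm_eq_cinner power_mono)
  then have "(cmod (cinner y x))\<^sup>2 \<le> 0"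
    using Re_cinner_self_pos[OF False] by (simp add: field_simps)
  then show ?thesis by simp
qed simp

end

lemma parallelogram_law:
  fixes a b :: "'a::complex_inner"
  shows "(norm (a + b))\<^sup>2 + (norm (a - b))\<^sup>2 = 2 * (norm a)\<^sup>2 + 2 * (norm b)\<^sup>2"
  by (simp add: power2_norm_eq_cinner cinner_add_left cinner_add_right cinner_diff_left cinner_diff_right)

lemma apollonius:
  fixes a b z :: "'a::complex_inner"
  shows "(norm (a - b))\<^sup>2 = 2 * (norm (z - a))\<^sup>2 + 2 * (norm (z - b))\<^sup>2 - 4 * (norm (z - (1/2) *\<^sub>R (a + b)))\<^sup>2"
proof -
  have "2 *\<^sub>R (z - (1/2) *\<^sub>R (a + b)) = 2 *\<^sub>R z - (a + b)"
    by (simp add: scaleR_diff_right)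
  then have "(z - a) + (z - b) = 2 *\<^sub>R (z - (1/2) *\<^sub>R (a + b))"
    by (simp add: scaleR_2)
  then have "(norm ((z - a) + (z - b)))\<^sup>2 = 4 * (norm (z - (1/2) *\<^sub>R (a + b)))\<^sup>2"
    by (simp add: power_mult_distrib)
  moreover have "(z - a) - (z - b) = b - a" by simp
  ultimately show ?thesis
    using parallelogram_law[of "z - a" "z - b"] by (simp add: norm_minus_commute)
qed

section \<open>Nearest points, Riesz representation and adjoints\<close>

lemma Cauchy_if_dist_sq_le:
  fixes X :: "nat \<Rightarrow> 'a::metric_space"
  assumes dist: "\<And>j k. (dist (X j) (X k))\<^sup>2 \<le> e j + e k" and e: "e \<longlonglongrightarrow> 0"
  shows "Cauchy X"
proof (rule metric_CauchyI)
  fix \<epsilon> :: real assume "0 < \<epsilon>"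
  then have "\<forall>\<^sub>F n in sequentially. e n < \<epsilon>\<^sup>2 / 2"
    by (intro order_tendstoD(2)[OF e]) simp
  then obtain N where N: "\<And>n. N \<le> n \<Longrightarrow> e n < \<epsilon>\<^sup>2 / 2"
    by (auto simp: eventually_sequentially)
  have "dist (X j) (X k) < \<epsilon>" if "N \<le> j" "N \<le> k" for j k
  proof -
    have "(dist (X j) (X k))\<^sup>2 < \<epsilon>\<^sup>2"
      using dist[of j k] N[OF that(1)] N[OF that(2)] by linarith
    then show ?thesis using \<open>0 < \<epsilon>\<close> by (simp add: power2_less_imp_less)
  qed
  then show "\<exists>N. \<forall>j\<ge>N. \<forall>k\<ge>N. dist (X j) (X k) < \<epsilon>" by blast
qed

text \<open>A minimizing sequence is Cauchy by the parallelogram law.\<close>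
lemma nearest_point_exists:
  fixes z :: "'a::chilbert_space"
  assumes M: "closed M" "convex M" "M \<noteq> {}"
  obtains p where "p \<in> M" "\<And>m. m \<in> M \<Longrightarrow> norm (z - p) \<le> norm (z - m)"
proof -
  define D where "D = (\<lambda>m. (norm (z - m))\<^sup>2) ` M"
  define d where "d = Inf D"
  have d_le: "d \<le> (norm (z - m))\<^sup>2" if "m \<in> M" for m
    unfolding d_def D_def using that by (intro cInf_lower bdd_belowI[of _ 0]) auto
  have "\<exists>n\<in>M. (norm (z - n))\<^sup>2 < d + inverse (real (Suc k))" for k
  proof -
    have "Inf D < d + inverse (real (Suc k))" by (simp add: d_def)
    from cInf_lessD[OF _ this] show ?thesis using M(3) by (auto simp: D_def)
  qed
  then obtain n where n_M: "\<And>k. n k \<in> M"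
    and n_d: "\<And>k. (norm (z - n k))\<^sup>2 < d + inverse (real (Suc k))" by metis
  have "Cauchy n"
  proof (rule Cauchy_if_dist_sq_le)
    fix j k
    have "(1/2) *\<^sub>R (n j + n k) \<in> M"
      using convexD[OF M(2) n_M[of j] n_M[of k], of "1/2" "1/2"] by (simp add: scaleR_right_distrib)
    then show "(dist (n j) (n k))\<^sup>2 \<le> 2 * inverse (real (Suc j)) + 2 * inverse (real (Suc k))"
      using apollonius[of "n j" "n k" z] d_le n_d[of j] n_d[of k] by (simp add: dist_norm) fastforce
  qed (intro tendsto_mult_right_zero LIMSEQ_inverse_real_of_nat)
  then obtain p where lim: "n \<longlonglongrightarrow> p" by (auto simp: Cauchy_convergent_iff convergent_def)
  have "p \<in> M" by (rule closed_sequentially[OF M(1) n_M lim])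
  moreover have "(norm (z - p))\<^sup>2 \<le> d"
    using lim n_d by (intro LIMSEQ_le[OF _ LIMSEQ_inverse_real_of_nat_add, of "\<lambda>k. (norm (z - n k))\<^sup>2"])
      (auto intro!: tendsto_intros less_imp_le)
  ultimately show ?thesis using d_le that by (meson norm_ge_zero order_trans power2_le_imp_le)
qed

lemma bounded_linear_scaleC_left: "bounded_linear (\<lambda>c::complex. c *\<^sub>C (u::'a::complex_inner))"
proof (rule bounded_linear_intro[where K="norm u"])
  fix r :: real and c :: complex
  show "(r *\<^sub>R c) *\<^sub>C u = r *\<^sub>R (c *\<^sub>C u)"
    by (simp add: scaleR_scaleC scaleC_scaleC scaleR_conv_of_real)
qed (simp_all add: scaleC_add_left norm_scaleC)

lemma bounded_linear_scaleC_right: "bounded_linear (\<lambda>v::'a::complex_inner. c *\<^sub>C v)"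
proof (rule bounded_linear_intro[where K="cmod c"])
  fix r :: real and v :: 'a
  show "c *\<^sub>C (r *\<^sub>R v) = r *\<^sub>R (c *\<^sub>C v)"
    by (simp add: scaleR_scaleC scaleC_scaleC mult.commute)
qed (simp_all add: scaleC_add_right norm_scaleC mult.commute)

lemma bounded_linear_functionalI:
  fixes l :: "'a::complex_inner \<Rightarrow> complex"
  assumes "\<And>x y. l (x + y) = l x + l y" and "\<And>c x. l (c *\<^sub>C x) = c * l x"
    and "\<And>x. cmod (l x) \<le> K * norm x"
  shows "bounded_linear l"
proof (rule bounded_linear_intro[where K=K])
  fix r :: real and x :: 'a
  show "l (r *\<^sub>R x) = r *\<^sub>R l x"
    using assms(2)[of "complex_of_real r" x] by (simp add: scaleR_scaleC scaleR_conv_of_real)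
qed (simp_all add: assms mult.commute)

lemma bounded_linear_cinner_right: "bounded_linear (cinner (x::'a::complex_inner))"
  by (rule bounded_linear_functionalI[where K="norm x"])
    (simp_all add: cinner_add_right cinner_scaleC_right norm_cinner_le)

text \<open>With \<open>l z\<^sub>0 = 1\<close>, the element of least norm in \<open>z\<^sub>0 - ker l\<close> does it.\<close>
lemma exists_orthogonal_to_kernel:
  fixes l :: "'a::chilbert_space \<Rightarrow> complex"
  assumes add: "\<And>x y. l (x + y) = l x + l y" and scale: "\<And>c x. l (c *\<^sub>C x) = c * l x"
    and bl: "bounded_linear l" and "l z1 \<noteq> 0"
  obtains p where "l p = 1" "\<And>m. l m = 0 \<Longrightarrow> cinner m p = 0"
proof -
  define z0 where "z0 = inverse (l z1) *\<^sub>C z1"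
  have l_z0: "l z0 = 1" using \<open>l z1 \<noteq> 0\<close> by (simp add: z0_def scale)
  define N where "N = l -` {0}"
  have "closed N"
    unfolding N_def by (intro closed_vimage closed_singleton linear_continuous_on bl)
  moreover have "convex N"
    unfolding N_def by (intro convex_linear_vimage bounded_linear.linear[OF bl] convex_singleton)
  moreover have "0 \<in> N" using scale[of 0 0] by (simp add: N_def)
  ultimately obtain n0 where "n0 \<in> N" and n0_min: "\<And>m. m \<in> N \<Longrightarrow> norm (z0 - n0) \<le> norm (z0 - m)"
    using nearest_point_exists[of N z0] by blast
  have "l (z0 - n0) = 1" using \<open>n0 \<in> N\<close> l_z0 add[of "z0 - n0" n0] by (simp add: N_def)
  moreover have "cinner m (z0 - n0) = 0" if "l m = 0" for m
  proof (rule cinner_eq_0_if_norm_minimal)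
    fix t
    have "n0 + t *\<^sub>C m \<in> N" using \<open>n0 \<in> N\<close> that by (simp add: N_def add scale)
    from n0_min[OF this] show "norm (z0 - n0) \<le> norm (z0 - n0 - t *\<^sub>C m)"
      by (simp add: diff_diff_eq)
  qed
  ultimately show ?thesis using that by blast
qed

lemma riesz_representation:
  fixes l :: "'a::chilbert_space \<Rightarrow> complex"
  assumes add: "\<And>x y. l (x + y) = l x + l y" and scale: "\<And>c x. l (c *\<^sub>C x) = c * l x"
    and bound: "\<And>x. cmod (l x) \<le> K * norm x"
  shows "\<exists>r. \<forall>x. l x = cinner r x"
proof (cases "\<forall>x. l x = 0")
  case True
  then show ?thesis by (intro exI[of _ 0]) simp
next
  case False
  then obtain p where l_p: "l p = 1" and orth: "\<And>m. l m = 0 \<Longrightarrow> cinner m p = 0"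
    using exists_orthogonal_to_kernel[OF add scale bounded_linear_functionalI[OF add scale bound]]
    by blast
  have pp: "cinner p p \<noteq> 0" using l_p scale[of 0 0] cinner_eq_zero_iff[of p] by auto
  have rep: "cinner p z = l z * cinner p p" for z
  proof -
    have "l (z - l z *\<^sub>C p) = 0" using add[of "z - l z *\<^sub>C p" "l z *\<^sub>C p"] by (simp add: scale l_p)
    then have "cinner p (z - l z *\<^sub>C p) = 0"
      using orth cinner_commute[of p "z - l z *\<^sub>C p"] by simp
    then show ?thesis by (simp add: cinner_diff_right cinner_scaleC_right)
  qed
  have "l x = cinner (cnj (inverse (cinner p p)) *\<^sub>C p) x" for x
    using pp by (simp add: cinner_scaleC_left rep[of x])
  then show ?thesis by blast
qed

lemma cinner_ext:
  fixes u v :: "'a::complex_inner"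
  assumes "\<And>x. cinner x u = cinner x v"
  shows "u = v"
proof -
  have "cinner (u - v) (u - v) = 0" using assms[of "u - v"] by (simp add: cinner_diff_right)
  then show ?thesis using cinner_eq_zero_iff[of "u - v"] by simp
qed

lemma adj_eqI:
  fixes S G :: "'a::complex_inner \<Rightarrow> 'a"
  assumes "\<And>x y. cinner (S x) y = cinner x (G y)"
  shows "adj S = G"
  unfolding adj_def
proof (rule the_equality)
  fix G' assume "\<forall>x y. cinner (S x) y = cinner x (G' y)"
  then show "G' = G" using assms by (intro ext cinner_ext) metis
qed (use assms in blast)

lemma adjoint_exists:
  fixes S :: "'a::chilbert_space \<Rightarrow> 'a"
  assumes "S \<in> bops"
  shows "\<exists>G. \<forall>x y. cinner (S x) y = cinner x (G y)"
proof -
  from assms obtain K where lin: "clinear S" and K: "\<And>x. norm (S x) \<le> K * norm x"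
    unfolding bops_def by auto
  have "\<exists>r. \<forall>x. cinner y (S x) = cinner r x" for y
  proof (rule riesz_representation[where K="norm y * K"])
    fix x
    have "cmod (cinner y (S x)) \<le> norm y * norm (S x)" by (rule norm_cinner_le)
    also have "\<dots> \<le> norm y * (K * norm x)" by (simp add: K mult_left_mono)
    finally show "cmod (cinner y (S x)) \<le> norm y * K * norm x" by (simp add: mult.assoc)
  qed (use lin in \<open>simp_all add: clinear_def cinner_add_right cinner_scaleC_right\<close>)
  then obtain G where "\<And>y x. cinner y (S x) = cinner (G y) x" by metis
  then have "cinner (S x) y = cinner x (G y)" for x y
    using cinner_commute[of "S x" y] cinner_commute[of "G y" x] by simp
  then show ?thesis by blast
qed

lemma clinear_adj:
  fixes S :: "'a::chilbert_space \<Rightarrow> 'a"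
  assumes "S \<in> bops"
  shows "clinear (adj S)"
proof -
  obtain G where G: "\<And>x y. cinner (S x) y = cinner x (G y)" using adjoint_exists[OF assms] by blast
  have "G (a + b) = G a + G b" for a b
    by (rule cinner_ext) (simp add: G[symmetric] cinner_add_right)
  moreover have "G (c *\<^sub>C a) = c *\<^sub>C G a" for c a
    by (rule cinner_ext) (simp add: G[symmetric] cinner_scaleC_right)
  ultimately show ?thesis by (simp add: adj_eqI[OF G] clinear_def)
qed

section \<open>Local spectral subspaces\<close>

lemma local_resolventE:
  assumes "\<mu> \<in> local_resolvent T w"
  obtains U f where "open U" "\<mu> \<in> U" "hol_on f U" "\<And>\<nu>. \<nu> \<in> U \<Longrightarrow> \<nu> *\<^sub>C f \<nu> - T (f \<nu>) = w"
  using assms unfolding local_resolvent_def by blast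

lemma local_resolventI:
  assumes "open U" "\<mu> \<in> U" "hol_on f U" "\<And>\<nu>. \<nu> \<in> U \<Longrightarrow> \<nu> *\<^sub>C f \<nu> - T (f \<nu>) = w"
  shows "\<mu> \<in> local_resolvent T w"
  using assms unfolding local_resolvent_def by blast

lemma spectral_subspace_singleton_iff:
  "w \<in> spectral_subspace T {l} \<longleftrightarrow> (\<forall>\<mu>. \<mu> \<noteq> l \<longrightarrow> \<mu> \<in> local_resolvent T w)"
  unfolding spectral_subspace_def local_spectrum_def by auto

lemma hol_on_imp_isCont: "hol_on f U \<Longrightarrow> z \<in> U \<Longrightarrow> isCont f z"
  unfolding hol_on_def by (blast intro: has_derivative_continuous)

lemma has_derivative_scaleC_const:
  fixes v :: "'a::complex_inner"
  assumes "(g has_field_derivative D) (at z)"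
  shows "((\<lambda>\<mu>. g \<mu> *\<^sub>C v) has_derivative (\<lambda>h. h *\<^sub>C (D *\<^sub>C v))) (at z)"
proof -
  have "((\<lambda>\<mu>. g \<mu> *\<^sub>C v) has_derivative (\<lambda>h. (D * h) *\<^sub>C v)) (at z)"
    using bounded_linear.has_derivative[OF bounded_linear_scaleC_left, of g "(*) D" "at z" v] assms
    by (simp add: has_field_derivative_def)
  then show ?thesis by (simp add: scaleC_scaleC mult.commute)
qed

text \<open>The local resolvent function of an eigenvector is \<open>\<nu> \<mapsto> (\<nu> - \<alpha>)\<inverse> v\<close>.\<close>
lemma eigenvector_in_spectral_subspace:
  fixes B :: "'a::complex_inner \<Rightarrow> 'a"
  assumes lin: "clinear B" and eigen: "B v = \<alpha> *\<^sub>C v"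
  shows "v \<in> spectral_subspace B {\<alpha>}"
  unfolding spectral_subspace_singleton_iff
proof (intro allI impI)
  fix \<mu> assume "\<mu> \<noteq> \<alpha>"
  show "\<mu> \<in> local_resolvent B v"
  proof (rule local_resolventI[where U="- {\<alpha>}" and f="\<lambda>\<nu>. inverse (\<nu> - \<alpha>) *\<^sub>C v"])
    show "hol_on (\<lambda>\<nu>. inverse (\<nu> - \<alpha>) *\<^sub>C v) (- {\<alpha>})"
      unfolding hol_on_def
    proof
      fix z assume "z \<in> - {\<alpha>}"
      then have "((\<lambda>\<nu>. inverse (\<nu> - \<alpha>)) has_field_derivative - inverse ((z - \<alpha>)\<^sup>2)) (at z)"
        by (auto intro!: derivative_eq_intros simp: power2_eq_square field_simps)
      from has_derivative_scaleC_const[OF this]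
      show "\<exists>D. ((\<lambda>\<nu>. inverse (\<nu> - \<alpha>) *\<^sub>C v) has_derivative (\<lambda>h. h *\<^sub>C D)) (at z)" by blast
    qed
  next
    fix \<nu> assume "\<nu> \<in> - {\<alpha>}"
    have "\<nu> *\<^sub>C (inverse (\<nu> - \<alpha>) *\<^sub>C v) - B (inverse (\<nu> - \<alpha>) *\<^sub>C v)
        = inverse (\<nu> - \<alpha>) *\<^sub>C (\<nu> *\<^sub>C v - \<alpha> *\<^sub>C v)"
      using lin eigen by (simp add: clinear_def scaleC_diff_right scaleC_scaleC mult.commute)
    also have "\<dots> = (inverse (\<nu> - \<alpha>) * (\<nu> - \<alpha>)) *\<^sub>C v"
      by (simp add: scaleC_diff_left[symmetric] scaleC_scaleC)
    also have "\<dots> = v" using \<open>\<nu> \<in> - {\<alpha>}\<close> by (simp add: scaleC_one)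
    finally show "\<nu> *\<^sub>C (inverse (\<nu> - \<alpha>) *\<^sub>C v) - B (inverse (\<nu> - \<alpha>) *\<^sub>C v) = v" .
  qed (use \<open>\<mu> \<noteq> \<alpha>\<close> in \<open>auto simp: open_Compl\<close>)
qed

text \<open>At a nonzero point \<open>l\<close>, the local resolvent equation at \<open>0\<close> gives \<open>w = - B z\<close>.\<close>
lemma spectral_subspace_in_line:
  assumes range: "\<And>z. \<exists>c. B z = c *\<^sub>C u" and "l \<noteq> 0"
    and "w \<in> spectral_subspace B {l}"
  shows "\<exists>c. w = c *\<^sub>C u"
proof -
  have "0 \<in> local_resolvent B w"
    using assms(2,3) unfolding spectral_subspace_singleton_iff by auto
  then obtain z where "w = - B z" by (rule local_resolventE) force
  moreover obtain c where "B z = c *\<^sub>C u" using range by blast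
  ultimately show ?thesis by (metis scaleC_minus_left)
qed

lemma eq_0_if_mult_ident_eq_0:
  fixes g :: "complex \<Rightarrow> complex"
  assumes "isCont g 0" "open U" "0 \<in> U" "\<And>\<nu>. \<nu> \<in> U \<Longrightarrow> \<nu> * g \<nu> = 0"
  shows "g 0 = 0"
proof -
  have "\<forall>\<^sub>F \<nu> in at 0. \<nu> \<in> U \<and> \<nu> \<noteq> 0"
    using assms(2,3) by (auto simp: eventually_at_topological)
  then have "\<forall>\<^sub>F \<nu> in at 0. g \<nu> = 0"
    by eventually_elim (use assms(4) in auto)
  then have "(g \<longlongrightarrow> 0) (at 0)" by (rule tendsto_eventually)
  moreover have "(g \<longlongrightarrow> g 0) (at 0)" using assms(1) by (simp add: isCont_def)
  ultimately show ?thesis using tendsto_unique[OF at_neq_bot] by blast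
qed

definition butterfly :: "'a::complex_inner \<Rightarrow> 'a \<Rightarrow> 'a \<Rightarrow> 'a" where
  "butterfly u x = (\<lambda>v. cinner x v *\<^sub>C u)"

lemma clinear_butterfly: "clinear (butterfly u x)"
  unfolding clinear_def butterfly_def
  by (simp add: cinner_add_right cinner_scaleC_right scaleC_add_left scaleC_scaleC)

text \<open>Pair the local resolvent equation near \<open>\<langle>x, u\<rangle>\<close> with \<open>x\<close>: this is absurd at
  \<open>\<nu> = \<langle>x, u\<rangle>\<close> if \<open>\<langle>x, u\<rangle> \<noteq> 0\<close>, and by continuity at \<open>0\<close> otherwise.\<close>
lemma spectral_subspace_butterfly:
  assumes "l \<noteq> 0" and w: "w \<in> spectral_subspace (butterfly u x) {l}" and "w \<noteq> 0"
  shows "l = cinner x u"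
proof (rule ccontr)
  assume "l \<noteq> cinner x u"
  define \<alpha> where "\<alpha> = cinner x u"
  obtain c where wc: "w = c *\<^sub>C u"
    using spectral_subspace_in_line[OF _ assms(1) w] by (auto simp: butterfly_def)
  have "c \<noteq> 0" "u \<noteq> 0" using \<open>w \<noteq> 0\<close> wc by auto
  have "\<alpha> \<in> local_resolvent (butterfly u x) w"
    using w \<open>l \<noteq> cinner x u\<close> unfolding spectral_subspace_singleton_iff \<alpha>_def by auto
  then obtain U f where U: "open U" "\<alpha> \<in> U" and "hol_on f U"
    and res: "\<And>\<nu>. \<nu> \<in> U \<Longrightarrow> \<nu> *\<^sub>C f \<nu> - cinner x (f \<nu>) *\<^sub>C u = c *\<^sub>C u"
    by (rule local_resolventE) (auto simp: butterfly_def wc)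
  have res_x: "\<nu> * cinner x (f \<nu>) - cinner x (f \<nu>) * \<alpha> = c * \<alpha>" if "\<nu> \<in> U" for \<nu>
    using arg_cong[OF res[OF that], of "cinner x"]
    by (simp add: cinner_diff_right cinner_scaleC_right \<alpha>_def)
  show False
  proof (cases "\<alpha> = 0")
    case False
    then show False using res_x[OF U(2)] \<open>c \<noteq> 0\<close> by simp
  next
    case True
    have "isCont f 0" using hol_on_imp_isCont[OF \<open>hol_on f U\<close>] U True by simp
    then have "isCont (\<lambda>\<nu>. cinner x (f \<nu>)) 0"
      by (rule isCont_o2[OF _ linear_continuous_at[OF bounded_linear_cinner_right]])
    then have "cinner x (f 0) = 0"
      by (rule eq_0_if_mult_ident_eq_0[OF _ U(1)]) (use U True res_x in auto)
    then show False using res[of 0] U True \<open>c \<noteq> 0\<close> \<open>u \<noteq> 0\<close> by simp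
  qed
qed

lemma local_resolvent_scaleC:
  fixes B :: "'a::complex_inner \<Rightarrow> 'a"
  assumes "c \<noteq> 0" and lin: "clinear B" and "\<mu> \<in> local_resolvent B w"
  shows "c * \<mu> \<in> local_resolvent (\<lambda>v. c *\<^sub>C B v) w"
proof -
  obtain U f where U: "open U" "\<mu> \<in> U" and hol: "hol_on f U"
    and res: "\<And>\<nu>. \<nu> \<in> U \<Longrightarrow> \<nu> *\<^sub>C f \<nu> - B (f \<nu>) = w"
    using assms(3) by (rule local_resolventE) blast
  define d where "d = inverse c"
  have "d * c = 1" using \<open>c \<noteq> 0\<close> by (simp add: d_def)
  show ?thesis
  proof (rule local_resolventI[where U="(\<lambda>\<nu>. d * \<nu>) -` U" and f="\<lambda>\<nu>. d *\<^sub>C f (d * \<nu>)"])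
    show "open ((\<lambda>\<nu>. d * \<nu>) -` U)"
      by (rule continuous_open_vimage[OF U(1)]) (intro continuous_intros)
    show "c * \<mu> \<in> (\<lambda>\<nu>. d * \<nu>) -` U" using U(2) \<open>d * c = 1\<close> by (simp add: mult.assoc[symmetric])
    show "hol_on (\<lambda>\<nu>. d *\<^sub>C f (d * \<nu>)) ((\<lambda>\<nu>. d * \<nu>) -` U)"
      unfolding hol_on_def
    proof
      fix z assume "z \<in> (\<lambda>\<nu>. d * \<nu>) -` U"
      then obtain D where "(f has_derivative (\<lambda>h. h *\<^sub>C D)) (at (d * z))"
        using hol unfolding hol_on_def by auto
      from has_derivative_compose[OF has_derivative_mult_right[OF has_derivative_ident] this]
      have "((\<lambda>\<nu>. f (d * \<nu>)) has_derivative (\<lambda>h. (d * h) *\<^sub>C D)) (at z)" by simp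
      from bounded_linear.has_derivative[OF bounded_linear_scaleC_right this, of d]
      have "((\<lambda>\<nu>. d *\<^sub>C f (d * \<nu>)) has_derivative (\<lambda>h. h *\<^sub>C ((d * d) *\<^sub>C D))) (at z)"
        by (simp add: scaleC_scaleC mult_ac)
      then show "\<exists>D. ((\<lambda>\<nu>. d *\<^sub>C f (d * \<nu>)) has_derivative (\<lambda>h. h *\<^sub>C D)) (at z)" by blast
    qed
  next
    fix \<nu> assume "\<nu> \<in> (\<lambda>\<nu>. d * \<nu>) -` U"
    then have "(d * \<nu>) *\<^sub>C f (d * \<nu>) - B (f (d * \<nu>)) = w" by (simp add: res)
    then show "\<nu> *\<^sub>C (d *\<^sub>C f (d * \<nu>)) - c *\<^sub>C B (d *\<^sub>C f (d * \<nu>)) = w"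
      using lin \<open>d * c = 1\<close> by (simp add: clinear_def scaleC_scaleC mult_ac scaleC_one)
  qed
qed

lemma clinear_scaleC: "clinear B \<Longrightarrow> clinear (\<lambda>v. c *\<^sub>C B v)"
  unfolding clinear_def by (simp add: scaleC_add_right scaleC_left_commute)

lemma spectral_subspace_scaleC:
  fixes B :: "'a::complex_inner \<Rightarrow> 'a"
  assumes "c \<noteq> 0" and "clinear B"
  shows "spectral_subspace (\<lambda>v. c *\<^sub>C B v) {l} = spectral_subspace B {l / c}"
proof (intro set_eqI iffI)
  fix w assume w: "w \<in> spectral_subspace (\<lambda>v. c *\<^sub>C B v) {l}"
  have "(\<lambda>v. inverse c *\<^sub>C c *\<^sub>C B v) = B" using assms(1) by (simp add: scaleC_scaleC scaleC_one)
  moreover have "inverse c * (c * \<mu>) \<in> local_resolvent (\<lambda>v. inverse c *\<^sub>C c *\<^sub>C B v) w"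
    if "\<mu> \<noteq> l / c" for \<mu>
  proof (rule local_resolvent_scaleC[OF _ clinear_scaleC[OF assms(2)]])
    show "c * \<mu> \<in> local_resolvent (\<lambda>v. c *\<^sub>C B v) w"
      using w that assms(1) unfolding spectral_subspace_singleton_iff by (auto simp: field_simps)
  qed (use assms(1) in simp)
  ultimately show "w \<in> spectral_subspace B {l / c}"
    using assms(1) unfolding spectral_subspace_singleton_iff by (simp add: mult.assoc[symmetric])
next
  fix w assume w: "w \<in> spectral_subspace B {l / c}"
  have "c * (\<mu> / c) \<in> local_resolvent (\<lambda>v. c *\<^sub>C B v) w" if "\<mu> \<noteq> l" for \<mu>
  proof (rule local_resolvent_scaleC[OF assms])
    show "\<mu> / c \<in> local_resolvent B w"
      using w that assms(1) unfolding spectral_subspace_singleton_iff by (auto simp: field_simps)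
  qed
  then show "w \<in> spectral_subspace (\<lambda>v. c *\<^sub>C B v) {l}"
    using assms(1) unfolding spectral_subspace_singleton_iff by simp
qed

section \<open>Operators of rank at most two\<close>

lemma cspan_empty: "cspan ({}::'a::complex_vector set) = {0}"
  unfolding cspan_def by auto

lemma cspan_singletonD: "x \<in> cspan {a} \<Longrightarrow> \<exists>c. x = c *\<^sub>C (a::'a::complex_vector)"
  unfolding cspan_def by (auto simp: subset_singleton_iff intro: exI[of _ 0])

lemma cspan_pair: "c1 *\<^sub>C x1 + c2 *\<^sub>C x2 \<in> cspan {x1, x2::'a::complex_vector}"
  unfolding cspan_def
proof (cases "x1 = x2")
  case True
  then show "c1 *\<^sub>C x1 + c2 *\<^sub>C x2 \<in> {x. \<exists>F c. finite F \<and> F \<subseteq> {x1, x2} \<and> x = (\<Sum>v\<in>F. c v *\<^sub>C v)}"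
    by (intro CollectI exI[of _ "{x1}"] exI[of _ "\<lambda>_. c1 + c2"]) (simp add: scaleC_add_left)
next
  case False
  then show "c1 *\<^sub>C x1 + c2 *\<^sub>C x2 \<in> {x. \<exists>F c. finite F \<and> F \<subseteq> {x1, x2} \<and> x = (\<Sum>v\<in>F. c v *\<^sub>C v)}"
    by (intro CollectI exI[of _ "{x1, x2}"] exI[of _ "\<lambda>v. if v = x1 then c1 else c2"]) simp
qed

lemma rank_le_0_iff: "rank_le X 0 \<longleftrightarrow> (\<forall>z. X z = (0::'a::complex_vector))"
proof
  assume "rank_le X 0"
  then obtain V where "finite V" "card V \<le> 0" "range X \<subseteq> cspan V" unfolding rank_le_def by blast
  then show "\<forall>z. X z = 0" by (auto simp: cspan_empty)
next
  assume "\<forall>z. X z = 0"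
  then show "rank_le X 0" unfolding rank_le_def by (intro exI[of _ "{}"]) (auto simp: cspan_empty)
qed

lemma rank_le_1_imp_line:
  assumes "rank_le X 1"
  shows "\<exists>u. \<forall>z. \<exists>c. X z = c *\<^sub>C (u::'a::complex_vector)"
proof -
  obtain V where V: "finite V" "card V \<le> 1" "range X \<subseteq> cspan V"
    using assms unfolding rank_le_def by blast
  then consider "V = {}" | a where "V = {a}"
    by (metis card_0_eq card_1_singletonE le_Suc_eq One_nat_def le_zero_eq)
  then show ?thesis
  proof cases
    case 1
    then show ?thesis using V by (intro exI[of _ 0]) (auto simp: cspan_empty)
  next
    case (2 a)
    then show ?thesis using V cspan_singletonD by (intro exI[of _ a]) blast
  qed
qed

lemma not_rank_le_1_imp_independent_values:
  fixes X :: "'a::complex_vector \<Rightarrow> 'a"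
  assumes "\<not> rank_le X 1"
  obtains y1 y2 where "X y1 \<noteq> 0" "\<And>c. X y2 \<noteq> c *\<^sub>C X y1"
proof -
  have "\<exists>y1. X y1 \<noteq> 0"
  proof (rule ccontr)
    assume "\<nexists>y1. X y1 \<noteq> 0"
    then have "rank_le X 0" by (simp add: rank_le_0_iff)
    then have "rank_le X 1" unfolding rank_le_def by force
    with assms show False by simp
  qed
  then obtain y1 where y1: "X y1 \<noteq> 0" by blast
  have "\<exists>y2. \<forall>c. X y2 \<noteq> c *\<^sub>C X y1"
  proof (rule ccontr)
    assume "\<nexists>y2. \<forall>c. X y2 \<noteq> c *\<^sub>C X y1"
    have "X z \<in> cspan {X y1}" for z
    proof -
      obtain c where "X z = c *\<^sub>C X y1" using \<open>\<nexists>y2. \<forall>c. X y2 \<noteq> c *\<^sub>C X y1\<close> by blast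
      then show ?thesis using cspan_pair[of c "X y1" 0 "X y1"] by simp
    qed
    then have "range X \<subseteq> cspan {X y1}" by blast
    then have "rank_le X 1" unfolding rank_le_def by (intro exI[of _ "{X y1}"]) simp
    with assms show False by simp
  qed
  with y1 that show ?thesis by blast
qed

text \<open>Gram--Schmidt: the component of \<open>b\<close> orthogonal to \<open>a\<close>, suitably scaled.\<close>
lemma exists_functional_vanishing_on_first:
  fixes a b :: "'a::complex_inner"
  assumes "a \<noteq> 0" and "\<And>c. b \<noteq> c *\<^sub>C a"
  shows "\<exists>x. cinner x a = 0 \<and> cinner x b = 1"
proof -
  define p where "p = b - (cinner a b / cinner a a) *\<^sub>C a"
  have "cinner a a \<noteq> 0" using assms(1) cinner_eq_zero_iff by auto
  then have "cinner a p = 0"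
    by (simp add: p_def cinner_diff_right cinner_scaleC_right)
  then have pa: "cinner p a = 0" by (metis cinner_commute complex_cnj_zero)
  have "p \<noteq> 0" using assms(2) by (auto simp: p_def)
  then have pp: "cinner p p \<noteq> 0" using cinner_eq_zero_iff by auto
  have "cinner p b = cinner p (p + (cinner a b / cinner a a) *\<^sub>C a)"
    by (simp add: p_def)
  also have "\<dots> = cinner p p" by (simp add: cinner_add_right cinner_scaleC_right pa)
  finally show ?thesis
    using pa pp by (intro exI[of _ "cnj (inverse (cinner p p)) *\<^sub>C p"]) (simp add: cinner_scaleC_left)
qed

lemma clinear_comp: "clinear A \<Longrightarrow> clinear B \<Longrightarrow> clinear (A \<circ> B)"
  unfolding clinear_def by simp

lemma sum_butterfly_in_F2:
  fixes x1 x2 y1 y2 :: "'a::complex_inner"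
  shows "(\<lambda>z. butterfly x1 y1 z + butterfly x2 y2 z) \<in> F2"
proof -
  have lin: "clinear (\<lambda>z. butterfly x1 y1 z + butterfly x2 y2 z)"
    using clinear_butterfly[of x1 y1] clinear_butterfly[of x2 y2]
    by (simp add: clinear_def scaleC_add_right)
  moreover have bound: "norm (butterfly x1 y1 z + butterfly x2 y2 z)
      \<le> (norm y1 * norm x1 + norm y2 * norm x2) * norm z" for z
  proof -
    have "norm (butterfly x1 y1 z + butterfly x2 y2 z)
        \<le> cmod (cinner y1 z) * norm x1 + cmod (cinner y2 z) * norm x2"
      unfolding butterfly_def by (metis norm_scaleC norm_triangle_ineq)
    also have "\<dots> \<le> (norm y1 * norm z) * norm x1 + (norm y2 * norm z) * norm x2"
      by (intro add_mono mult_right_mono norm_cinner_le) auto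
    finally show ?thesis by (simp add: algebra_simps)
  qed
  ultimately have "(\<lambda>z. butterfly x1 y1 z + butterfly x2 y2 z) \<in> bops"
    unfolding bops_def by blast
  moreover have "range (\<lambda>z. butterfly x1 y1 z + butterfly x2 y2 z) \<subseteq> cspan {x1, x2}"
    unfolding butterfly_def using cspan_pair by blast
  then have "rank_le (\<lambda>z. butterfly x1 y1 z + butterfly x2 y2 z) 2"
    unfolding rank_le_def by (intro exI[of _ "{x1, x2}"]) (simp add: card_insert_if)
  ultimately show ?thesis by (simp add: F2_def)
qed

lemma butterfly_in_F2: "butterfly x y \<in> F2"
  using sum_butterfly_in_F2[of x y 0 0] by (simp add: butterfly_def)

lemma F2_subset_bops: "F2 \<subseteq> bops"
  unfolding F2_def by blast

lemma adj_sum_butterfly: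
  fixes x1 x2 y1 y2 :: "'a::complex_inner"
  shows "adj (\<lambda>z. butterfly x1 y1 z + butterfly x2 y2 z) = (\<lambda>z. butterfly y1 x1 z + butterfly y2 x2 z)"
  by (rule adj_eqI) (simp add: butterfly_def cinner_add_left cinner_add_right cinner_scaleC_left
      cinner_scaleC_right cinner_commute[of y1] cinner_commute[of y2] mult.commute)

lemma adj_butterfly: "adj (butterfly x y) = butterfly y x"
  using adj_sum_butterfly[of x y 0 0] by (simp add: butterfly_def)

lemma clinear_comp_butterfly: "clinear A \<Longrightarrow> A \<circ> butterfly u x = butterfly (A u) x"
  by (simp add: clinear_def butterfly_def fun_eq_iff)

lemma cinner_eq_if_spectral_subspaces_butterfly_eq:
  assumes "\<And>l. spectral_subspace (butterfly u x) {l} = spectral_subspace (butterfly v x) {l}"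
  shows "cinner x u = cinner x v"
proof -
  have "cinner x u = cinner x v"
    if eq: "\<And>l. spectral_subspace (butterfly u x) {l} = spectral_subspace (butterfly v x) {l}"
      and "cinner x u \<noteq> 0" for u v
  proof (rule spectral_subspace_butterfly)
    have "u \<in> spectral_subspace (butterfly u x) {cinner x u}"
      by (rule eigenvector_in_spectral_subspace[OF clinear_butterfly]) (simp add: butterfly_def)
    then show "u \<in> spectral_subspace (butterfly v x) {cinner x u}" by (simp add: eq)
  qed (use \<open>cinner x u \<noteq> 0\<close> in auto)
  from this[of u v] this[of v u] assms show ?thesis by metis
qed

lemma clinear_eq_if_spectral_subspaces_butterfly_eq:
  fixes A A' :: "'a::complex_inner \<Rightarrow> 'a"
  assumes "clinear A" "clinear A'"
    and "\<And>x y l. spectral_subspace (A \<circ> adj (butterfly x y)) {l}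
                 = spectral_subspace (A' \<circ> adj (butterfly x y)) {l}"
  shows "A = A'"
proof (intro ext cinner_ext)
  fix x y
  show "cinner x (A y) = cinner x (A' y)"
    by (rule cinner_eq_if_spectral_subspaces_butterfly_eq)
      (use assms(3)[of x y] in \<open>simp add: adj_butterfly clinear_comp_butterfly[OF assms(1)]
        clinear_comp_butterfly[OF assms(2)]\<close>)
qed

definition spectral_subspace_1_in_line :: "('a::complex_inner \<Rightarrow> 'a) \<Rightarrow> bool" where
  "spectral_subspace_1_in_line B \<longleftrightarrow> (\<exists>u. \<forall>w\<in>spectral_subspace B {1}. \<exists>c. w = c *\<^sub>C u)"

lemma spectral_subspace_1_in_line_if_rank_le_1:
  "rank_le X 1 \<Longrightarrow> spectral_subspace_1_in_line (X \<circ> G)"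
proof -
  assume "rank_le X 1"
  then obtain u where "\<And>z. \<exists>c. (X \<circ> G) z = c *\<^sub>C u" using rank_le_1_imp_line by fastforce
  then show "spectral_subspace_1_in_line (X \<circ> G)"
    unfolding spectral_subspace_1_in_line_def using spectral_subspace_in_line[of "X \<circ> G" u 1] by auto
qed

text \<open>If \<open>T y\<^sub>1, T y\<^sub>2\<close> are independent, choose \<open>S\<close> of rank two with \<open>T S\<^sup>* T y\<^sub>i = T y\<^sub>i\<close>.\<close>
lemma not_spectral_subspace_1_in_line_if_not_rank_le_1:
  fixes T :: "'a::complex_inner \<Rightarrow> 'a"
  assumes "clinear T" and "\<not> rank_le T 1"
  shows "\<exists>S\<in>F2. \<not> spectral_subspace_1_in_line (T \<circ> adj S)"
proof -
  obtain y1 y2 where a: "T y1 \<noteq> 0" and b: "\<And>c. T y2 \<noteq> c *\<^sub>C T y1"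
    using not_rank_le_1_imp_independent_values[OF assms(2)] by metis
  have "T y2 \<noteq> 0" using b[of 0] by simp
  moreover have "T y1 \<noteq> c *\<^sub>C T y2" for c
    using a b[of "inverse c"] by (cases "c = 0") (auto simp: scaleC_scaleC scaleC_one)
  ultimately obtain x1 where x1: "cinner x1 (T y2) = 0" "cinner x1 (T y1) = 1"
    using exists_functional_vanishing_on_first by blast
  obtain x2 where x2: "cinner x2 (T y1) = 0" "cinner x2 (T y2) = 1"
    using exists_functional_vanishing_on_first[OF a] b by blast
  define S where "S = (\<lambda>z. butterfly x1 y1 z + butterfly x2 y2 z)"
  have TS: "T (adj S w) = cinner x1 w *\<^sub>C T y1 + cinner x2 w *\<^sub>C T y2" for w
    using assms(1) unfolding S_def adj_sum_butterfly by (simp add: butterfly_def clinear_def)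
  have lin: "clinear (T \<circ> adj S)"
    using assms(1) unfolding clinear_def
    by (simp add: TS cinner_add_right cinner_scaleC_right scaleC_add_left scaleC_add_right scaleC_scaleC)
  have in1: "T y1 \<in> spectral_subspace (T \<circ> adj S) {1}"
    and in2: "T y2 \<in> spectral_subspace (T \<circ> adj S) {1}"
    by (rule eigenvector_in_spectral_subspace[OF lin], simp add: TS x1 x2 scaleC_one)+
  have "\<not> spectral_subspace_1_in_line (T \<circ> adj S)"
  proof
    assume "spectral_subspace_1_in_line (T \<circ> adj S)"
    then obtain u c1 c2 where "T y1 = c1 *\<^sub>C u" "T y2 = c2 *\<^sub>C u"
      using in1 in2 unfolding spectral_subspace_1_in_line_def by blast
    with a have "T y2 = (c2 / c1) *\<^sub>C T y1" by (simp add: scaleC_scaleC)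
    with b show False by blast
  qed
  then show ?thesis using sum_butterfly_in_F2 unfolding S_def by blast
qed

lemma rank_le_1_iff_spectral_subspace_1_in_line:
  fixes T :: "'a::complex_inner \<Rightarrow> 'a"
  assumes "clinear T"
  shows "rank_le T 1 \<longleftrightarrow> (\<forall>S\<in>F2. spectral_subspace_1_in_line (T \<circ> adj S))"
  using spectral_subspace_1_in_line_if_rank_le_1 not_spectral_subspace_1_in_line_if_not_rank_le_1[OF assms]
  by blast

section \<open>Additive preservers of spectral subspaces\<close>

lemma zero_in_bops: "(\<lambda>x. 0) \<in> bops"
  unfolding bops_def clinear_def by (auto intro!: exI[of _ 0])

lemma scaleC_in_bops:
  assumes "T \<in> bops"
  shows "(\<lambda>x. c *\<^sub>C T x) \<in> bops"
proof -
  obtain K where lin: "clinear T" and K: "\<And>x. norm (T x) \<le> K * norm x"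
    using assms unfolding bops_def by auto
  have "norm (c *\<^sub>C T x) \<le> (cmod c * K) * norm x" for x
    using mult_left_mono[OF K[of x], of "cmod c"] by (simp add: norm_scaleC mult.assoc)
  then show ?thesis using clinear_scaleC[OF lin] unfolding bops_def by blast
qed

lemma clinear_if_in_bops: "T \<in> bops \<Longrightarrow> clinear T"
  unfolding bops_def by simp

lemma spectral_subspace_scaleC_comp:
  assumes "c \<noteq> 0" and "clinear (A \<circ> G)"
  shows "spectral_subspace ((\<lambda>x. c *\<^sub>C A x) \<circ> G) {l} = spectral_subspace (A \<circ> G) {l / c}"
  using spectral_subspace_scaleC[OF assms] by (simp add: comp_def)

locale spectral_preserver =
  fixes \<phi> :: "('a::chilbert_space \<Rightarrow> 'a) \<Rightarrow> ('a \<Rightarrow> 'a)"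
  assumes maps: "\<forall>T\<in>bops. \<phi> T \<in> bops"
    and additive: "\<forall>T\<in>bops. \<forall>S\<in>bops. \<phi> (\<lambda>x. T x + S x) = (\<lambda>x. \<phi> T x + \<phi> S x)"
    and range_F2: "F2 \<subseteq> \<phi> ` bops"
    and preserves: "\<forall>T\<in>bops. \<forall>S\<in>bops. \<forall>l.
        spectral_subspace (\<phi> T \<circ> adj (\<phi> S)) {l} = spectral_subspace (T \<circ> adj S) {l}"
begin

lemma clinear_phi: "T \<in> bops \<Longrightarrow> clinear (\<phi> T)"
  using maps clinear_if_in_bops by blast

lemma phi_zero: "\<phi> (\<lambda>x. 0) = (\<lambda>x. 0)"
proof -
  have "\<phi> (\<lambda>x. 0) = (\<lambda>x. \<phi> (\<lambda>x. 0) x + \<phi> (\<lambda>x. 0) x)"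
    using additive zero_in_bops by fastforce
  then show ?thesis by (metis add_cancel_right_right)
qed

lemma inj_on_phi: "inj_on \<phi> bops"
proof (rule inj_onI)
  fix T T' assume T: "T \<in> bops" and T': "T' \<in> bops" and eq: "\<phi> T = \<phi> T'"
  show "T = T'"
  proof (rule clinear_eq_if_spectral_subspaces_butterfly_eq[OF clinear_if_in_bops[OF T]
        clinear_if_in_bops[OF T']])
    fix x y :: 'a and l
    have "butterfly x y \<in> bops" using butterfly_in_F2 F2_subset_bops by blast
    then show "spectral_subspace (T \<circ> adj (butterfly x y)) {l}
        = spectral_subspace (T' \<circ> adj (butterfly x y)) {l}"
      using preserves T T' eq by metis
  qed
qed

lemma phi_scaleC:
  assumes T: "T \<in> bops"
  shows "\<phi> (\<lambda>x. c *\<^sub>C T x) = (\<lambda>x. c *\<^sub>C \<phi> T x)"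
proof (cases "c = 0")
  case True
  then show ?thesis using phi_zero by simp
next
  case False
  have cT: "(\<lambda>x. c *\<^sub>C T x) \<in> bops" by (rule scaleC_in_bops[OF T])
  show ?thesis
  proof (rule clinear_eq_if_spectral_subspaces_butterfly_eq)
    show "clinear (\<phi> (\<lambda>x. c *\<^sub>C T x))" "clinear (\<lambda>x. c *\<^sub>C \<phi> T x)"
      using clinear_phi[OF cT] clinear_scaleC[OF clinear_phi[OF T]] .
  next
    fix x y :: 'a and l
    obtain S where S: "S \<in> bops" and S_phi: "butterfly x y = \<phi> S"
      using range_F2 butterfly_in_F2 by blast
    have "clinear (T \<circ> adj S)" "clinear (\<phi> T \<circ> adj (\<phi> S))"
      using clinear_comp clinear_if_in_bops clinear_phi clinear_adj maps S T by metis+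
    then have "spectral_subspace (\<phi> (\<lambda>x. c *\<^sub>C T x) \<circ> adj (\<phi> S)) {l}
        = spectral_subspace ((\<lambda>x. c *\<^sub>C \<phi> T x) \<circ> adj (\<phi> S)) {l}"
      using preserves S T cT by (simp add: spectral_subspace_scaleC_comp[OF False])
    then show "spectral_subspace (\<phi> (\<lambda>x. c *\<^sub>C T x) \<circ> adj (butterfly x y)) {l}
        = spectral_subspace ((\<lambda>x. c *\<^sub>C \<phi> T x) \<circ> adj (butterfly x y)) {l}"
      by (simp add: S_phi)
  qed
qed

lemma spectral_subspace_1_in_line_phi:
  "T \<in> bops \<Longrightarrow> S \<in> bops \<Longrightarrow>
    spectral_subspace_1_in_line (\<phi> T \<circ> adj (\<phi> S)) \<longleftrightarrow> spectral_subspace_1_in_line (T \<circ> adj S)"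
  unfolding spectral_subspace_1_in_line_def using preserves by simp

lemma rank_le_1_phi_iff:
  assumes R: "R \<in> bops"
  shows "rank_le (\<phi> R) 1 \<longleftrightarrow> rank_le R 1"
proof
  assume "rank_le (\<phi> R) 1"
  then have "spectral_subspace_1_in_line (R \<circ> adj S)" if "S \<in> F2" for S
    using spectral_subspace_1_in_line_if_rank_le_1 spectral_subspace_1_in_line_phi[OF R]
      that F2_subset_bops by blast
  then show "rank_le R 1"
    using rank_le_1_iff_spectral_subspace_1_in_line[OF clinear_if_in_bops[OF R]] by blast
next
  assume "rank_le R 1"
  then have "spectral_subspace_1_in_line (\<phi> R \<circ> adj S0)" if "S0 \<in> F2" for S0
    using spectral_subspace_1_in_line_if_rank_le_1 spectral_subspace_1_in_line_phi[OF R]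
      that range_F2 by blast
  then show "rank_le (\<phi> R) 1"
    using rank_le_1_iff_spectral_subspace_1_in_line[OF clinear_phi[OF R]] by blast
qed

lemma rank_one_phi_iff:
  assumes R: "R \<in> bops"
  shows "rank_one (\<phi> R) \<longleftrightarrow> rank_one R"
proof -
  have "\<phi> R = (\<lambda>x. 0) \<longleftrightarrow> R = (\<lambda>x. 0)"
    using inj_on_phi R zero_in_bops phi_zero by (metis inj_on_def)
  then have "rank_le (\<phi> R) 0 \<longleftrightarrow> rank_le R 0" by (simp add: rank_le_0_iff fun_eq_iff)
  then show ?thesis unfolding rank_one_def using rank_le_1_phi_iff[OF R] by simp
qed

end

theorem mainTheorem2:
  fixes \<phi> :: "('a::chilbert_space \<Rightarrow> 'a) \<Rightarrow> ('a \<Rightarrow> 'a)"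
  assumes inf_dim: "infinite_dimensional TYPE('a)"
    and maps: "\<forall>T\<in>bops. \<phi> T \<in> bops"
    and additive: "\<forall>T\<in>bops. \<forall>S\<in>bops. \<phi> (\<lambda>x. T x + S x) = (\<lambda>x. \<phi> T x + \<phi> S x)"
    and range_F2: "F2 \<subseteq> \<phi> ` bops"
    and preserves: "\<forall>T\<in>bops. \<forall>S\<in>bops. \<forall>l.
        spectral_subspace (\<phi> T \<circ> adj (\<phi> S)) {l} = spectral_subspace (T \<circ> adj S) {l}"
  shows "inj_on \<phi> bops
    \<and> (\<forall>T\<in>bops. \<forall>c. \<phi> (\<lambda>x. c *\<^sub>C T x) = (\<lambda>x. c *\<^sub>C \<phi> T x))
    \<and> (\<forall>R\<in>bops. rank_one R \<longleftrightarrow> rank_one (\<phi> R))"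
proof -
  interpret spectral_preserver \<phi>
    using maps additive range_F2 preserves by unfold_locales
  show ?thesis using inj_on_phi phi_scaleC rank_one_phi_iff by simp
qed

end
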